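(* Let $S=\mathbb{R}$ or $S=\mathbb{C}$ and let $X$ be a vector space over $S$, viewed as an algebra $a\colon\mathcal{M}_S(X)\to X$ of the multiset monad ($a(\sum_j s_jx_j)=\sum_j s_j\cdot x_j$). Then $\overline{\mathcal{M}_S}$-coalgebras (bases in the coalgebraic sense) on $X$ correspond bijectively to Hamel bases of $X$: a Hamel basis $B$ gives the coalgebra $b(x)=\sum_j s_j a_j$, where $x=\sum_j s_j\cdot a_j$ is the unique expansion of $x$ with $a_j\in B$; conversely, for a coalgebra $b$ the set $X_b=\{x\in X\mid b(x)=1x\}$ is a Hamel basis of $X$, and $b$ is the coordinate-expansion map with respect to it.
   Context: For a semiring $S$, the multiset monad $\mathcal{M}_S$ on $\mathbf{Sets}$ is $\mathcal{M}_S(X)=\{\varphi\colon X\to S\mid \mathrm{supp}(\varphi)\text{ finite}\}$, written as formal finite sums $\sum_i s_ix_i$; unit $\eta(x)=1x$; multiplication $\mu(\sum_i s_i\varphi_i)(x)=\sum_i s_i\cdot\varphi_i(x)$. Its Eilenberg–Moore algebras are $S$-modules. The induced comonad $\overline{\mathcal{M}_S}$ on modules sends a module $X$ to the free module $\mathcal{M}_S(X)$ on its underlying set, with counit $\varepsilon(\sum_j s_jx_j)=\sum_j s_j\cdot x_j$ (the actual sum in $X$) and comultiplication $\delta(\sum_j s_jx_j)=\sum_j s_j(1x_j)$. A $\overline{\mathcal{M}_S}$-coalgebra on $X$ is a module map $b\colon X\to\mathcal{M}_S(X)$ with $\varepsilon\circ b=\mathrm{id}$ and $\delta\circ b=\mathcal{M}_S(b)\circ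 b$. *)

theory Defs
  imports Complex_Main
begin

text \<open>Multiset monad M_S on Sets: elements of M_S(X) are finitely supported
functions X \<Rightarrow> S, represented as plain functions together with finiteness of support.\<close>

definition ms_supp :: "('x \<Rightarrow> 's::zero) \<Rightarrow> 'x set" where
  "ms_supp \<phi> = {x. \<phi> x \<noteq> 0}"

definition ms_finite :: "('x \<Rightarrow> 's::zero) \<Rightarrow> bool" where
  "ms_finite \<phi> \<longleftrightarrow> finite (ms_supp \<phi>)"

definition ms_unit :: "'x \<Rightarrow> ('x \<Rightarrow> 's::{zero,one})" where
  "ms_unit x = (\<lambda>y. if y = x then 1 else 0)"

definition ms_map :: "('x \<Rightarrow> 'y) \<Rightarrow> ('x \<Rightarrow> 's::comm_monoid_add) \<Rightarrow> ('y \<Rightarrow> 's)" where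
  "ms_map f \<phi> = (\<lambda>y. \<Sum>x\<in>{x. \<phi> x \<noteq> 0 \<and> f x = y}. \<phi> x)"

text \<open>Counit of the comonad on modules: the algebra map a(sum_j s_j x_j) = sum_j s_j . x_j\<close>
definition ms_counit :: "('s \<Rightarrow> 'v \<Rightarrow> 'v) \<Rightarrow> ('v \<Rightarrow> 's::zero) \<Rightarrow> 'v::comm_monoid_add" where
  "ms_counit scale \<phi> = (\<Sum>x\<in>ms_supp \<phi>. scale (\<phi> x) x)"

text \<open>Comultiplication delta(sum_j s_j x_j) = sum_j s_j (1 x_j)\<close>
definition ms_comult :: "('v \<Rightarrow> 's::{zero,one}) \<Rightarrow> (('v \<Rightarrow> 's) \<Rightarrow> 's)" where
  "ms_comult \<phi> = (\<lambda>\<psi>. if \<exists>x. \<psi> = ms_unit x then \<phi> (THE x. \<psi> = ms_unit x) else 0)"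

text \<open>A coalgebra of the induced comonad on the module X (scalar multiplication scale):
a module map b : X \<rightarrow> M_S(X) (pointwise module structure on M_S(X)) with
counit o b = id and comult o b = M_S(b) o b.\<close>
definition ms_coalgebra :: "('s::comm_ring_1 \<Rightarrow> 'v \<Rightarrow> 'v) \<Rightarrow> ('v::ab_group_add \<Rightarrow> ('v \<Rightarrow> 's)) \<Rightarrow> bool" where
  "ms_coalgebra scale b \<longleftrightarrow>
     (\<forall>x. ms_finite (b x)) \<and>
     (\<forall>x y. b (x + y) = (\<lambda>z. b x z + b y z)) \<and>
     (\<forall>c x. b (scale c x) = (\<lambda>z. c * b x z)) \<and>
     (\<forall>x. ms_counit scale (b x) = x) \<and>
     (\<forall>x. ms_comult (b x) = ms_map b (b x))"

definition hamel_basis :: "('s::comm_ring_1 \<Rightarrow> 'v \<Rightarrow> 'v) \<Rightarrow> 'v::ab_group_add set \<Rightarrow> bool" where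
  "hamel_basis scale B \<longleftrightarrow> \<not> module.dependent scale B \<and> module.span scale B = UNIV"

definition basis_coalg :: "('s::comm_ring_1 \<Rightarrow> 'v \<Rightarrow> 'v) \<Rightarrow> 'v::ab_group_add set \<Rightarrow> 'v \<Rightarrow> ('v \<Rightarrow> 's)" where
  "basis_coalg scale B = module.representation scale B"

definition coalg_basis :: "('v \<Rightarrow> ('v \<Rightarrow> 's::{zero,one})) \<Rightarrow> 'v set" where
  "coalg_basis b = {x. b x = ms_unit x}"

end

theory Submission
  imports Defs
begin

text \<open>A Hamel basis \<open>B\<close> gives the coordinate map, which is a coalgebra because every basis
vector is sent to its own unit \<open>1 z\<close>. Conversely, for a coalgebra \<open>b\<close> the comultiplication law
evaluated at \<open>b z\<close> shows that every \<open>z\<close> in the support of some \<open>b x\<close> satisfies \<open>b z = 1 z\<close>;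
the counit law then says that \<open>x\<close> is the combination of these \<open>z\<close> with coefficients \<open>b x\<close>, and
linearity of \<open>b\<close> shows that they are independent.\<close>

lemma ms_unit_eq_iff: "(ms_unit x :: 'x \<Rightarrow> 's::zero_neq_one) = ms_unit y \<longleftrightarrow> x = y"
  unfolding ms_unit_def by (metis one_neq_zero)

lemma ms_comult_ms_unit:
  "ms_comult \<phi> (ms_unit y :: 'v \<Rightarrow> 's::zero_neq_one) = \<phi> y"
  by (simp add: ms_comult_def ms_unit_eq_iff)

lemma ms_comult_not_unit:
  "\<nexists>y. \<psi> = ms_unit y \<Longrightarrow> ms_comult \<phi> \<psi> = 0"
  by (simp add: ms_comult_def)

context vector_space
begin

lemma ms_counit_ms_unit: "ms_counit scale (ms_unit y) = y"
proof -
  have "ms_supp (ms_unit y :: 'b \<Rightarrow> 'a) = {y}"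
    by (auto simp: ms_supp_def ms_unit_def)
  then show ?thesis
    by (simp add: ms_counit_def ms_unit_def)
qed

lemma representation_basis_eq_ms_unit:
  "independent B \<Longrightarrow> z \<in> B \<Longrightarrow> representation B z = ms_unit z"
  using representation_basis by (auto simp: ms_unit_def)

lemma ms_comult_representation:
  assumes "independent B"
  shows "ms_comult (representation B x) = ms_map (representation B) (representation B x)"
proof
  fix \<psi>
  let ?r = "representation B x"
  have preimage: "{z. ?r z \<noteq> 0 \<and> representation B z = \<psi>} = {z. ?r z \<noteq> 0 \<and> ms_unit z = \<psi>}"
    using representation_basis_eq_ms_unit[OF assms] representation_ne_zero by auto
  show "ms_comult ?r \<psi> = ms_map (representation B) ?r \<psi>"
  proof (cases "\<exists>y. \<psi> = ms_unit y")
    case True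
    then obtain y where y: "\<psi> = ms_unit y" by blast
    have "{z. ?r z \<noteq> 0 \<and> ms_unit z = \<psi>} = (if ?r y = 0 then {} else {y})"
      using y by (auto simp: ms_unit_eq_iff)
    then have "ms_map (representation B) ?r \<psi> = ?r y"
      unfolding ms_map_def preimage by simp
    then show ?thesis
      by (simp add: y ms_comult_ms_unit)
  next
    case False
    then have "{z. ?r z \<noteq> 0 \<and> ms_unit z = \<psi>} = {}" by auto
    then have "ms_map (representation B) ?r \<psi> = 0"
      unfolding ms_map_def preimage by (simp only: sum.empty)
    with False show ?thesis
      by (simp add: ms_comult_not_unit)
  qed
qed

lemma ms_coalgebra_representation:
  assumes "hamel_basis scale B"
  shows "ms_coalgebra scale (representation B)"
proof -
  have ind: "independent B" and sp: "\<And>x. x \<in> span B"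
    using assms by (auto simp: hamel_basis_def)
  show ?thesis
    unfolding ms_coalgebra_def
  proof (intro conjI allI)
    fix x
    show "ms_finite (representation B x)"
      by (simp add: ms_finite_def ms_supp_def finite_representation)
    show "ms_counit scale (representation B x) = x"
      unfolding ms_counit_def ms_supp_def by (rule sum_nonzero_representation_eq[OF ind sp])
    show "ms_comult (representation B x) = ms_map (representation B) (representation B x)"
      by (rule ms_comult_representation[OF ind])
  next
    fix x y
    show "representation B (x + y) = (\<lambda>z. representation B x z + representation B y z)"
      by (rule representation_add[OF ind sp sp])
  next
    fix c x
    show "representation B (c *s x) = (\<lambda>z. c * representation B x z)"
      by (rule representation_scale[OF ind sp])
  qed
qed

lemma coalg_basis_representation:
  assumes "hamel_basis scale B"
  shows "coalg_basis (representation B) = B"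
proof -
  have ind: "independent B"
    using assms by (simp add: hamel_basis_def)
  have "x \<in> B" if "representation B x = ms_unit x" for x
  proof -
    have "representation B x x \<noteq> 0"
      using that by (simp add: ms_unit_def)
    then show ?thesis
      by (rule representation_ne_zero)
  qed
  then show ?thesis
    by (auto simp: coalg_basis_def representation_basis_eq_ms_unit[OF ind])
qed

lemma ms_coalgebra_zero:
  assumes "ms_coalgebra scale b"
  shows "b 0 = (\<lambda>z. 0)"
proof
  fix z
  have "b (0 + 0) = (\<lambda>z. b 0 z + b 0 z)"
    using assms by (simp only: ms_coalgebra_def)
  then have "b 0 z = b 0 z + b 0 z"
    by (simp only: add_0_left fun_eq_iff)
  then show "b 0 z = 0"
    by (metis add_left_cancel add.right_neutral)
qed

lemma ms_coalgebra_sum: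
  assumes "ms_coalgebra scale b"
  shows "b (\<Sum>i\<in>I. f i) = (\<lambda>z. \<Sum>i\<in>I. b (f i) z)"
proof -
  have "b (x + y) = (\<lambda>z. b x z + b y z)" for x y
    using assms by (simp add: ms_coalgebra_def)
  then show ?thesis
    by (induction I rule: infinite_finite_induct) (simp_all add: ms_coalgebra_zero[OF assms])
qed

text \<open>The comultiplication law at \<open>b z\<close>: its left side is \<open>b x z\<close> if \<open>b z\<close> is a unit \<open>1 y\<close> and
\<open>0\<close> otherwise, while its right side is \<open>b x z\<close> because \<open>b\<close> is injective by the counit law.\<close>

lemma ms_coalgebra_support_unit:
  assumes cb: "ms_coalgebra scale b" and nz: "b x z \<noteq> 0"
  shows "b z = ms_unit z"
proof -
  have counit: "\<And>x. ms_counit scale (b x) = x"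
    using cb by (simp add: ms_coalgebra_def)
  then have "inj b"
    by (metis injI)
  then have "{w. b x w \<noteq> 0 \<and> b w = b z} = {z}"
    using nz by (auto simp: inj_eq)
  then have "ms_map b (b x) (b z) = b x z"
    by (simp add: ms_map_def)
  with cb nz have "ms_comult (b x) (b z) \<noteq> 0"
    by (simp add: ms_coalgebra_def)
  then obtain y where y: "b z = ms_unit y"
    using ms_comult_not_unit[of "b z" "b x"] by blast
  with counit[of z] have "z = y"
    by (simp add: ms_counit_ms_unit)
  with y show ?thesis by simp
qed

lemma ms_coalgebra_sum_support:
  "ms_coalgebra scale b \<Longrightarrow> (\<Sum>z | b x z \<noteq> 0. b x z *s z) = x"
  by (simp add: ms_coalgebra_def ms_counit_def ms_supp_def)

lemma span_coalg_basis:
  assumes "ms_coalgebra scale b"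
  shows "x \<in> span (coalg_basis b)"
proof -
  have "{z. b x z \<noteq> 0} \<subseteq> coalg_basis b"
    using ms_coalgebra_support_unit[OF assms] by (auto simp: coalg_basis_def)
  then have "(\<Sum>z | b x z \<noteq> 0. b x z *s z) \<in> span (coalg_basis b)"
    by (intro span_sum span_scale span_base) auto
  then show ?thesis
    by (simp add: ms_coalgebra_sum_support[OF assms])
qed

lemma independent_coalg_basis:
  assumes cb: "ms_coalgebra scale b"
  shows "independent (coalg_basis b)"
  unfolding independent_explicit_module
proof (intro allI impI)
  fix t u v
  assume "finite t" and t: "t \<subseteq> coalg_basis b" and zero: "(\<Sum>w\<in>t. u w *s w) = 0" and "v \<in> t"
  have "b (\<Sum>w\<in>t. u w *s w) v = (\<Sum>w\<in>t. u w * ms_unit w v)"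
    using t cb by (auto simp: ms_coalgebra_sum coalg_basis_def ms_coalgebra_def intro!: sum.cong)
  also have "\<dots> = u v"
    using \<open>finite t\<close> \<open>v \<in> t\<close> by (simp add: ms_unit_def if_distrib cong: if_cong)
  finally have "u v = b 0 v"
    using zero by simp
  also have "b 0 v = 0"
    by (simp add: ms_coalgebra_zero[OF cb])
  finally show "u v = 0" .
qed

lemma hamel_basis_coalg_basis:
  "ms_coalgebra scale b \<Longrightarrow> hamel_basis scale (coalg_basis b)"
  using independent_coalg_basis span_coalg_basis by (auto simp: hamel_basis_def)

lemma ms_coalgebra_eq_representation:
  assumes cb: "ms_coalgebra scale b"
  shows "b = representation (coalg_basis b)"
proof
  fix x
  have fin: "finite {z. b x z \<noteq> 0}"
    using cb by (simp add: ms_coalgebra_def ms_finite_def ms_supp_def)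
  have support: "{z. b x z \<noteq> 0} \<subseteq> coalg_basis b"
    using ms_coalgebra_support_unit[OF cb] by (auto simp: coalg_basis_def)
  show "b x = representation (coalg_basis b) x"
    by (rule representation_eqI[OF independent_coalg_basis[OF cb] span_coalg_basis[OF cb], symmetric])
      (use fin support in \<open>auto simp: ms_coalgebra_sum_support[OF cb]\<close>)
qed

lemma hamel_basis_ms_coalgebra_correspondence:
  "bij_betw (basis_coalg scale) {B. hamel_basis scale B} {b. ms_coalgebra scale b}
     \<and> (\<forall>B. hamel_basis scale B \<longrightarrow> coalg_basis (basis_coalg scale B) = B)
     \<and> (\<forall>b. ms_coalgebra scale b \<longrightarrow>
            hamel_basis scale (coalg_basis b) \<and> b = basis_coalg scale (coalg_basis b))"
proof (intro conjI allI impI)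
  show "bij_betw (basis_coalg scale) {B. hamel_basis scale B} {b. ms_coalgebra scale b}"
  proof (rule bij_betw_byWitness[where f' = coalg_basis])
    show "\<forall>B\<in>{B. hamel_basis scale B}. coalg_basis (basis_coalg scale B) = B"
      by (simp add: basis_coalg_def coalg_basis_representation)
    show "\<forall>b\<in>{b. ms_coalgebra scale b}. basis_coalg scale (coalg_basis b) = b"
      unfolding basis_coalg_def using ms_coalgebra_eq_representation by force
    show "basis_coalg scale ` {B. hamel_basis scale B} \<subseteq> {b. ms_coalgebra scale b}"
      by (auto simp: basis_coalg_def ms_coalgebra_representation)
    show "coalg_basis ` {b. ms_coalgebra scale b} \<subseteq> {B. hamel_basis scale B}"
      by (auto simp: hamel_basis_coalg_basis)
  qed
next
  fix B
  show "hamel_basis scale B \<Longrightarrow> coalg_basis (basis_coalg scale B) = B"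
    by (simp add: basis_coalg_def coalg_basis_representation)
next
  fix b
  assume "ms_coalgebra scale b"
  then show "hamel_basis scale (coalg_basis b)" and "b = basis_coalg scale (coalg_basis b)"
    by (simp_all add: hamel_basis_coalg_basis basis_coalg_def ms_coalgebra_eq_representation)
qed

end

theorem theorem3p2:
  fixes sR :: "real \<Rightarrow> 'a::ab_group_add \<Rightarrow> 'a"
    and sC :: "complex \<Rightarrow> 'b::ab_group_add \<Rightarrow> 'b"
  assumes "vector_space sR" and "vector_space sC"
  shows "bij_betw (basis_coalg sR) {B. hamel_basis sR B} {b. ms_coalgebra sR b}
       \<and> (\<forall>B. hamel_basis sR B \<longrightarrow> coalg_basis (basis_coalg sR B) = B)
       \<and> (\<forall>b. ms_coalgebra sR b \<longrightarrow>
              hamel_basis sR (coalg_basis b) \<and> b = basis_coalg sR (coalg_basis b))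
       \<and> bij_betw (basis_coalg sC) {B. hamel_basis sC B} {b. ms_coalgebra sC b}
       \<and> (\<forall>B. hamel_basis sC B \<longrightarrow> coalg_basis (basis_coalg sC B) = B)
       \<and> (\<forall>b. ms_coalgebra sC b \<longrightarrow>
              hamel_basis sC (coalg_basis b) \<and> b = basis_coalg sC (coalg_basis b))"
proof -
  note real = vector_space.hamel_basis_ms_coalgebra_correspondence[OF assms(1)]
  note complex = vector_space.hamel_basis_ms_coalgebra_correspondence[OF assms(2)]
  from real complex show ?thesis
    by (elim conjE) (intro conjI)
qed

end
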